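(* Let $A$ be a set of factorizations on an alphabet $S$ and let $w$ be a weight on $A$. Let $\Phi$ be the linear operator with $\Phi(t^n)=n!$ for $n\ge 0$ which fixes all other variables (extended coefficientwise to power series in the other variables). Then \[ \Phi\big(f_{A,w}(t)\big) = \sum_{W} w(W), \] whenever both sides are defined, where the sum on the right runs over all elements $W\in A$ having at most one part (i.e., words, including the empty factorization).
   Context: A word on an alphabet $S$ is a finite sequence of letters of $S$; a subword is a consecutive block of letters. A factorization on $S$ is an ordered list $(\phi_1)(\phi_2)\cdots(\phi_k)$ of nonempty words on $S$, its parts; $\mathrm{parts}(\phi)=k$ is the number of parts. A word $W$ is identified with the one-part factorization $(W)$, and the empty word with the factorization with no parts, written $\emptyset$. For $T\subseteq S$, the restriction $\phi|_T$ is the factorization whose parts are the maximal subwords of the parts of $\phi$ that use only letters of $T$, ordered by their occurrence in $\phi$ (it is $\emptyset$ if $\phi$ uses no letter of $T$). A weight on a set $A$ of factorizations on $S$ is a function $w$ from $A$ together with all restrictions of elements of $A$ into a polynomial ring $\mathbb{R}[x_1,x_2,\ldots]$ such that $w(\phi)=w(\phi|_T)\,w(\phi|_{S\setminus T})$ for all $\phi\in A$ and $T\subseteq S$. The polynomials $l_k(t)$ are defined by $\sum_{k\ge0}l_k(t)x^k=e^{tx/(1+x)}$ (so $l_0=1$, $l_1=t$; $l_k(t)=(-1)^kL_k^{(-1)}(t)$ with $L_k^{(\alpha)}$ the generalized Laguerre polynomials). The Laguerre series of $A$ with respect to $w$ is the formal power series $f_{A,w}(t)=\sum_{\phi\in A}w(\phi)\,l_{\mathrm{parts}(\phi)}(t)$,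 when this sum is well-defined as a formal power series. *)

theory Defs
  imports "HOL-Library.Poly_Mapping" "HOL-Computational_Algebra.Formal_Power_Series"
begin

(* Words on an alphabet are lists; a factorization is a list of nonempty words (its parts). *)
type_synonym 'a factorization = "'a list list"

definition factorization_on :: "'a set \<Rightarrow> 'a factorization \<Rightarrow> bool" where
  "factorization_on S \<phi> \<longleftrightarrow> (\<forall>p\<in>set \<phi>. p \<noteq> [] \<and> set p \<subseteq> S)"

definition parts :: "'a factorization \<Rightarrow> nat" where
  "parts \<phi> = length \<phi>"

(* split a word at the letters not in T (blocks may be empty) *)
fun splitT :: "'a set \<Rightarrow> 'a list \<Rightarrow> 'a list list" where
  "splitT T [] = [[]]"
| "splitT T (x # xs) =
     (if x \<in> T then (let rs = splitT T xs in (x # hd rs) # tl rs)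
      else [] # splitT T xs)"

definition runs :: "'a set \<Rightarrow> 'a list \<Rightarrow> 'a list list" where
  "runs T xs = filter (\<lambda>r. r \<noteq> []) (splitT T xs)"

definition restrict_fact :: "'a set \<Rightarrow> 'a factorization \<Rightarrow> 'a factorization" where
  "restrict_fact T \<phi> = concat (map (runs T) \<phi>)"

(* The polynomial ring R[x_1,x_2,...]: monomials are finitely supported exponent vectors. *)
type_synonym mpoly = "(nat \<Rightarrow>\<^sub>0 nat) \<Rightarrow>\<^sub>0 real"

definition is_weight :: "'a set \<Rightarrow> 'a factorization set \<Rightarrow> ('a factorization \<Rightarrow> mpoly) \<Rightarrow> bool" where
  "is_weight S A w \<longleftrightarrow>
     (\<forall>\<phi>\<in>A. \<forall>T. T \<subseteq> S \<longrightarrow> w \<phi> = w (restrict_fact T \<phi>) * w (restrict_fact (S - T) \<phi>))"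

(* l_k(t) = sum_j lag_coeff k j * t^j, where sum_k l_k(t) x^k = e^{t x/(1+x)}
   = sum_j t^j (x/(1+x))^j / j!  *)
definition lag_coeff :: "nat \<Rightarrow> nat \<Rightarrow> real" where
  "lag_coeff k j = fps_nth ((fps_X * inverse (1 + fps_X)) ^ j) k / fact j"

(* Well-definedness of an infinite sum of formal power series indexed by I,
   coefficientwise: for every monomial only finitely many terms are nonzero. *)
definition sum_defined :: "('i \<Rightarrow> 'm \<Rightarrow> real) \<Rightarrow> 'i set \<Rightarrow> bool" where
  "sum_defined g I \<longleftrightarrow> (\<forall>m. finite {i\<in>I. g i m \<noteq> 0})"

definition fsum :: "('i \<Rightarrow> 'm \<Rightarrow> real) \<Rightarrow> 'i set \<Rightarrow> 'm \<Rightarrow> real" where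
  "fsum g I m = (\<Sum>i\<in>{i\<in>I. g i m \<noteq> 0}. g i m)"

(* Laguerre series f_{A,w}(t) as a power series in t and the x's:
   coefficient of t^n x^m is indexed by (n, m) *)
definition lag_term :: "('a factorization \<Rightarrow> mpoly) \<Rightarrow> 'a factorization \<Rightarrow> nat \<times> (nat \<Rightarrow>\<^sub>0 nat) \<Rightarrow> real" where
  "lag_term w \<phi> nm = Poly_Mapping.lookup (w \<phi>) (snd nm) * lag_coeff (parts \<phi>) (fst nm)"

definition laguerre_series_defined :: "'a factorization set \<Rightarrow> ('a factorization \<Rightarrow> mpoly) \<Rightarrow> bool" where
  "laguerre_series_defined A w \<longleftrightarrow> sum_defined (lag_term w) A"

definition laguerre_series :: "'a factorization set \<Rightarrow> ('a factorization \<Rightarrow> mpoly) \<Rightarrow> nat \<times> (nat \<Rightarrow>\<^sub>0 nat) \<Rightarrow> real" where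
  "laguerre_series A w = fsum (lag_term w) A"

(* Phi: t^n \<mapsto> n!, coefficientwise in the other variables. For a series F (coefficient of t^n x^m is F (n,m)),
   Phi(F) is defined iff for every m only finitely many n have F (n,m) \<noteq> 0. *)
definition Phi_defined :: "(nat \<times> (nat \<Rightarrow>\<^sub>0 nat) \<Rightarrow> real) \<Rightarrow> bool" where
  "Phi_defined F \<longleftrightarrow> sum_defined (\<lambda>n m. fact n * F (n, m)) UNIV"

definition Phi :: "(nat \<times> (nat \<Rightarrow>\<^sub>0 nat) \<Rightarrow> real) \<Rightarrow> (nat \<Rightarrow>\<^sub>0 nat) \<Rightarrow> real" where
  "Phi F = fsum (\<lambda>n m. fact n * F (n, m)) UNIV"

end

theory Submission
  imports Defs
begin

text \<open>With \<open>y = x/(1+x)\<close> we have \<open>n! [t^n] l\<^sub>k = [x^k] y^n\<close>, so \<open>\<Phi>(l\<^sub>k) = [x^k] \<Sum>\<^sub>n y^n =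
  [x^k] 1/(1-y) = [x^k] (1+x)\<close>, which is 1 for \<open>k \<le> 1\<close> and 0 otherwise. Applying \<open>\<Phi>\<close>
  termwise to \<open>f\<^sub>A\<^sub>,\<^sub>w\<close> leaves exactly the terms with at most one part. Only the
  well-definedness of the Laguerre series is needed: its \<open>t\<^sup>1\<close>-coefficient involves
  \<open>l\<^sub>k'(0) = (-1)\<^sup>k\<^sup>-\<^sup>1 \<noteq> 0\<close>, so for each monomial only finitely many weights are nonzero, and
  since \<open>deg l\<^sub>k = k\<close> every coefficient of \<open>f\<^sub>A\<^sub>,\<^sub>w\<close> is a polynomial in \<open>t\<close>.\<close>

lemma power_X_over_1_plus_X:
  "(fps_X * inverse (1 + fps_X) :: real fps) ^ n = fps_X ^ n * inverse (1 + fps_X) ^ n"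
  by (simp add: power_mult_distrib)

lemma lag_coeff_eq_0: "k < n \<Longrightarrow> lag_coeff k n = 0"
  unfolding lag_coeff_def power_X_over_1_plus_X by (simp add: fps_X_power_mult_nth)

lemma lag_coeff_1:
  assumes "k \<ge> 1"
  shows "lag_coeff k 1 = (-1) ^ (k - 1)"
proof -
  have "lag_coeff k 1 = fps_nth (fps_X ^ 1 * inverse (1 + fps_X) :: real fps) k"
    unfolding lag_coeff_def by simp
  also have "\<dots> = (-1) ^ (k - 1)"
    using assms by (simp only: fps_X_power_mult_nth fps_inverse_fps_X_plus1) simp
  finally show ?thesis .
qed

lemma sum_atMost_power_X_over_1_plus_X:
  "(\<Sum>n\<le>K. (fps_X * inverse (1 + fps_X) :: real fps) ^ n)
     = 1 + fps_X - fps_X ^ Suc K * ((1 + fps_X) * inverse (1 + fps_X) ^ Suc K)"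
proof -
  define g :: "real fps" where "g = inverse (1 + fps_X)"
  define y where "y = fps_X * g"
  have g: "(1 + fps_X) * g = 1" unfolding g_def by (rule inverse_mult_eq_1') simp
  have "(1 + fps_X) * (1 - y) = 1 + fps_X - fps_X * ((1 + fps_X) * g)"
    unfolding y_def by (simp add: algebra_simps)
  with g have inv: "(1 + fps_X) * (1 - y) = 1" by simp
  have "(\<Sum>n\<le>K. y ^ n) = (1 + fps_X) * ((1 - y) * (\<Sum>n\<le>K. y ^ n))"
    using inv by (simp add: mult.assoc[symmetric])
  also have "\<dots> = (1 + fps_X) * (1 - y ^ Suc K)" by (simp only: sum_gp_basic)
  also have "\<dots> = 1 + fps_X - fps_X ^ Suc K * ((1 + fps_X) * g ^ Suc K)"
    unfolding y_def by (simp add: power_mult_distrib algebra_simps)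
  finally show ?thesis unfolding y_def g_def .
qed

text \<open>This is \<open>\<Phi>(l\<^sub>k) = [k \<le> 1]\<close>; the sum may be cut off at any \<open>K \<ge> k = deg l\<^sub>k\<close>.\<close>

lemma sum_fact_lag_coeff:
  assumes "k \<le> K"
  shows "(\<Sum>n\<le>K. fact n * lag_coeff k n) = (if k \<le> 1 then 1 else 0)"
proof -
  have "(\<Sum>n\<le>K. fact n * lag_coeff k n)
          = fps_nth (\<Sum>n\<le>K. (fps_X * inverse (1 + fps_X) :: real fps) ^ n) k"
    unfolding lag_coeff_def by (simp add: fps_sum_nth)
  also have "\<dots> = fps_nth (1 + fps_X :: real fps) k"
    unfolding sum_atMost_power_X_over_1_plus_X using assms
    by (simp only: fps_sub_nth fps_X_power_mult_nth) simp
  also have "\<dots> = (if k \<le> 1 then 1 else 0)"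
    by (cases k) (auto simp: fps_X_def)
  finally show ?thesis .
qed

lemma finite_weight_support:
  assumes "laguerre_series_defined A w"
  shows "finite {\<phi>\<in>A. Poly_Mapping.lookup (w \<phi>) m \<noteq> 0}"
proof -
  have "lag_coeff (parts \<phi>) 1 \<noteq> 0" if "\<phi> \<noteq> []" for \<phi> :: "'a factorization"
  proof -
    have "parts \<phi> \<ge> 1" using that by (simp add: parts_def Suc_le_eq)
    then show ?thesis unfolding lag_coeff_1[OF \<open>parts \<phi> \<ge> 1\<close>] by simp
  qed
  then have "{\<phi>\<in>A. Poly_Mapping.lookup (w \<phi>) m \<noteq> 0} \<subseteq> insert [] {\<phi>\<in>A. lag_term w \<phi> (1, m) \<noteq> 0}"
    by (auto simp: lag_term_def)
  moreover have "finite {\<phi>\<in>A. lag_term w \<phi> (1, m) \<noteq> 0}"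
    using assms unfolding laguerre_series_defined_def sum_defined_def by blast
  ultimately show ?thesis by (meson finite_insert finite_subset)
qed

lemma laguerre_series_eq_sum:
  assumes "finite B" "{\<phi>\<in>A. Poly_Mapping.lookup (w \<phi>) m \<noteq> 0} \<subseteq> B" "B \<subseteq> A"
  shows "laguerre_series A w (n, m) = (\<Sum>\<phi>\<in>B. Poly_Mapping.lookup (w \<phi>) m * lag_coeff (parts \<phi>) n)"
proof -
  have "laguerre_series A w (n, m) = (\<Sum>\<phi>\<in>B. lag_term w \<phi> (n, m))"
    unfolding laguerre_series_def fsum_def
    by (rule sum.mono_neutral_left) (use assms in \<open>auto simp: lag_term_def\<close>)
  then show ?thesis by (simp add: lag_term_def)
qed

lemma Phi_eq_sum_atMost:
  assumes "\<And>n. n > K \<Longrightarrow> F (n, m) = 0"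
  shows "Phi F m = (\<Sum>n\<le>K. fact n * F (n, m))"
  unfolding Phi_def fsum_def
  by (rule sum.mono_neutral_left) (use assms in \<open>auto simp: not_le[symmetric]\<close>)

lemma Phi_laguerre_series:
  assumes "laguerre_series_defined A w"
  shows "Phi (laguerre_series A w) m
           = (\<Sum>\<phi>\<in>{\<phi>\<in>A. Poly_Mapping.lookup (w \<phi>) m \<noteq> 0 \<and> parts \<phi> \<le> 1}. Poly_Mapping.lookup (w \<phi>) m)"
proof -
  let ?c = "\<lambda>\<phi>. Poly_Mapping.lookup (w \<phi>) m"
  define B where "B = {\<phi>\<in>A. ?c \<phi> \<noteq> 0}"
  define K where "K = Max (insert 0 (parts ` B))"
  have B: "finite B" using finite_weight_support[OF assms] by (simp add: B_def)
  then have K: "\<phi> \<in> B \<Longrightarrow> parts \<phi> \<le> K" for \<phi> by (simp add: K_def)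
  have F: "laguerre_series A w (n, m) = (\<Sum>\<phi>\<in>B. ?c \<phi> * lag_coeff (parts \<phi>) n)" for n
    using B by (intro laguerre_series_eq_sum) (auto simp: B_def)
  have "Phi (laguerre_series A w) m = (\<Sum>n\<le>K. fact n * laguerre_series A w (n, m))"
    by (rule Phi_eq_sum_atMost) (auto simp: F dest!: K intro!: sum.neutral lag_coeff_eq_0)
  also have "\<dots> = (\<Sum>\<phi>\<in>B. ?c \<phi> * (\<Sum>n\<le>K. fact n * lag_coeff (parts \<phi>) n))"
    unfolding F sum_distrib_left by (subst sum.swap) (simp add: mult_ac)
  also have "\<dots> = (\<Sum>\<phi>\<in>B. if parts \<phi> \<le> 1 then ?c \<phi> else 0)"
    by (rule sum.cong) (simp_all add: sum_fact_lag_coeff K)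
  also have "\<dots> = (\<Sum>\<phi>\<in>{\<phi>\<in>B. parts \<phi> \<le> 1}. ?c \<phi>)"
    using B by (simp add: sum.inter_filter)
  finally show ?thesis by (simp add: B_def conj_assoc)
qed

theorem proposition2p6:
  fixes S :: "'a set" and A :: "'a factorization set" and w :: "'a factorization \<Rightarrow> mpoly"
  assumes "\<forall>\<phi>\<in>A. factorization_on S \<phi>"
    and "is_weight S A w"
    and "laguerre_series_defined A w"
    and "Phi_defined (laguerre_series A w)"
    and "sum_defined (\<lambda>W m. Poly_Mapping.lookup (w W) m) {W\<in>A. parts W \<le> 1}"
  shows "Phi (laguerre_series A w) = fsum (\<lambda>W m. Poly_Mapping.lookup (w W) m) {W\<in>A. parts W \<le> 1}"
proof
  fix m
  show "Phi (laguerre_series A w) m = fsum (\<lambda>W m. Poly_Mapping.lookup (w W) m) {W\<in>A. parts W \<le> 1} m"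
    unfolding Phi_laguerre_series[OF assms(3)] fsum_def by (rule sum.cong) auto
qed

end
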